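(* For every positive integer $\nu$ there exists a sequence $v_0,v_1,\dots,v_{\nu^2}$ of length $\nu^2+1$ taking values in a set of $\nu$ symbols and having the isolated equality property: for all distinct indices $i,j$ with $v_i=v_j$, we have $v_{i+1}\ne v_{j+1}$ whenever both are defined, and $v_{i-1}\neq v_{j-1}$ whenever both are defined. *)

theory Defs
  imports Main
begin

definition isolated_equality :: "nat \<Rightarrow> (nat \<Rightarrow> 'a) \<Rightarrow> bool" where
  "isolated_equality L v \<longleftrightarrow>
     (\<forall>i \<le> L. \<forall>j \<le> L. i \<noteq> j \<and> v i = v j \<longrightarrow>
        (i + 1 \<le> L \<and> j + 1 \<le> L \<longrightarrow> v (i + 1) \<noteq> v (j + 1)) \<and>
        (1 \<le> i \<and> 1 \<le> j \<longrightarrow> v (i - 1) \<noteq> v (j - 1)))"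

end

theory Submission
  imports Defs
begin

text \<open>Read the sequence as a walk in the complete directed graph with loops on the
  symbols 0, ..., n. The isolated equality property says exactly that no directed edge
  is traversed twice, so a sequence of length (n+1)^2 + 1 with it is an Eulerian circuit.
  One is built by induction on n: a circuit on 0, ..., n ending at 0 is extended by the
  hub tour 0, m, 1, m, 2, ..., m-1, m, m, 0 with m = n+1, which uses exactly the edges
  incident to m. The resulting walk covers all (n+1)^2 edges with (n+1)^2 steps, so no
  edge repeats.\<close>

fun adj_pairs :: "'a list \<Rightarrow> ('a \<times> 'a) list" where
  "adj_pairs (x # y # zs) = (x, y) # adj_pairs (y # zs)"
| "adj_pairs _ = []"

lemma length_adj_pairs [simp]: "length (adj_pairs xs) = length xs - 1"
  by (induction xs rule: adj_pairs.induct) auto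

lemma nth_adj_pairs: "i < length xs - 1 \<Longrightarrow> adj_pairs xs ! i = (xs ! i, xs ! Suc i)"
proof (induction xs arbitrary: i rule: adj_pairs.induct)
  case (1 x y zs)
  then show ?case by (cases i) auto
qed auto

lemma adj_pairs_append:
  "xs \<noteq> [] \<Longrightarrow> adj_pairs (xs @ ys) = adj_pairs xs @ adj_pairs (last xs # ys)"
  by (induction xs rule: adj_pairs.induct) (auto simp: neq_Nil_conv)

lemma isolated_equality_if_distinct_adj_pairs:
  assumes "length xs = Suc L" and "distinct (adj_pairs xs)"
  shows "isolated_equality L (\<lambda>i. xs ! i)"
proof -
  have adj_pair_eq: "i = j"
    if "i < L" "j < L" "xs ! i = xs ! j" "xs ! Suc i = xs ! Suc j" for i j
  proof -
    have "adj_pairs xs ! i = adj_pairs xs ! j"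
      using that assms(1) by (simp add: nth_adj_pairs)
    then show "i = j"
      using that assms by (simp add: nth_eq_iff_index_eq)
  qed
  show ?thesis
    unfolding isolated_equality_def
  proof (intro allI impI conjI notI)
    fix i j
    assume ij: "i \<le> L" "j \<le> L" "i \<noteq> j \<and> xs ! i = xs ! j"
    show False if "i + 1 \<le> L \<and> j + 1 \<le> L" "xs ! (i + 1) = xs ! (j + 1)"
      using adj_pair_eq[of i j] ij that by simp
    show False if "1 \<le> i \<and> 1 \<le> j" "xs ! (i - 1) = xs ! (j - 1)"
    proof -
      have "i - 1 = j - 1"
        using ij that by (intro adj_pair_eq) (auto simp: Suc_le_eq)
      then show False
        using ij that by linarith
    qed
  qed
qed

definition hub_tour :: "nat \<Rightarrow> nat list" where
  "hub_tour m = m # concat (map (\<lambda>k. [k, m]) [1..<m]) @ [m, 0]"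

lemma length_hub_tour: "length (hub_tour m) = 2 * m + 1" if "m \<ge> 1"
proof -
  have "length (concat (map (\<lambda>k. [k, m]) ks)) = 2 * length ks" for ks :: "nat list"
    by (induction ks) auto
  then show ?thesis
    using that unfolding hub_tour_def by simp
qed

lemma set_adj_pairs_spokes:
  "set (adj_pairs (m # concat (map (\<lambda>k. [k, m]) ks) @ ys)) =
     (\<Union>k\<in>set ks. {(m, k), (k, m)}) \<union> set (adj_pairs (m # ys))"
  by (induction ks) auto

lemma set_adj_pairs_hub_tour:
  "set (adj_pairs (0 # hub_tour m)) = {p \<in> {0..m} \<times> {0..m}. fst p = m \<or> snd p = m}"
  unfolding hub_tour_def by (auto simp: set_adj_pairs_spokes)

fun euler_seq :: "nat \<Rightarrow> nat list" where
  "euler_seq 0 = [0, 0]"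
| "euler_seq (Suc n) = euler_seq n @ hub_tour (Suc n)"

lemma euler_seq_ends_at_zero: "euler_seq n \<noteq> [] \<and> last (euler_seq n) = 0"
  by (induction n) (auto simp: hub_tour_def)

lemma length_euler_seq: "length (euler_seq n) = (n + 1)^2 + 1"
  by (induction n) (auto simp: length_hub_tour power2_eq_square)

lemma set_euler_seq: "set (euler_seq n) \<subseteq> {0..n}"
  by (induction n) (auto simp: hub_tour_def)

lemma set_adj_pairs_euler_seq: "set (adj_pairs (euler_seq n)) = {0..n} \<times> {0..n}"
proof (induction n)
  case (Suc n)
  have "adj_pairs (euler_seq (Suc n)) = adj_pairs (euler_seq n) @ adj_pairs (0 # hub_tour (Suc n))"
    using euler_seq_ends_at_zero[of n] by (simp add: adj_pairs_append)
  then show ?case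
    using Suc.IH by (auto simp: set_adj_pairs_hub_tour)
qed simp

lemma distinct_adj_pairs_euler_seq: "distinct (adj_pairs (euler_seq n))"
proof (rule card_distinct)
  show "card (set (adj_pairs (euler_seq n))) = length (adj_pairs (euler_seq n))"
    by (simp add: set_adj_pairs_euler_seq length_euler_seq card_cartesian_product power2_eq_square)
qed

theorem mainTheorem4:
  fixes \<nu> :: nat
  assumes "\<nu> \<ge> 1"
  shows "\<exists>v :: nat \<Rightarrow> nat. (\<forall>i \<le> \<nu>^2. v i \<in> {0..<\<nu>}) \<and> isolated_equality (\<nu>^2) v"
proof -
  obtain n where n: "\<nu> = n + 1"
    using assms by (cases \<nu>) auto
  have "\<forall>i \<le> \<nu>^2. euler_seq n ! i \<in> {0..<\<nu>}"
  proof (intro allI impI)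
    fix i
    assume "i \<le> \<nu>^2"
    then have "euler_seq n ! i \<in> set (euler_seq n)"
      by (simp add: n length_euler_seq)
    then show "euler_seq n ! i \<in> {0..<\<nu>}"
      using set_euler_seq[of n] n by auto
  qed
  moreover have "isolated_equality (\<nu>^2) (\<lambda>i. euler_seq n ! i)"
    by (rule isolated_equality_if_distinct_adj_pairs)
      (simp_all add: n length_euler_seq distinct_adj_pairs_euler_seq)
  ultimately show ?thesis
    by blast
qed

end
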